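(* Let $f:\mathbb{R}^d\to\mathbb{R}$ be convex, $1\le p\le\infty$ and $\alpha\ge 1$, and let $W_\alpha(\mathbf{x}):=e^{-|\mathbf{x}|^\alpha}$. Assume that $fW_\alpha\in L_p(\mathbb{R}^d)$ if $1\le p<\infty$, or that $f\in C(\mathbb{R}^d)$ with $\lim_{|\mathbf{x}|\to\infty}f(\mathbf{x})W_\alpha(\mathbf{x})=0$ if $p=\infty$. Then for any $\varepsilon>0$ there exists a piecewise linear convex function $h$ such that \[ \|(f-h)W_\alpha\|_{L_p(\mathbb{R}^d)}<\varepsilon \] and \[ \omega(h,t,\mathbb{R}^d)\le Lt\quad\text{for any } t>0, \] where $L>0$ does not depend on $t$.
   Context: $|\cdot|$ is the Euclidean norm on $\mathbb{R}^d$. A function $g:\mathbb{R}^d\to\mathbb{R}$ is called piecewise linear convex if it is the pointwise maximum of finitely many linear (i.e. affine, degree $\le 1$ polynomial) functions on $\mathbb{R}^d$. For $g:M\to\mathbb{R}$, the modulus of continuity is $\omega(g,t,M):=\sup\{|g(\mathbf{x}')-g(\mathbf{x}'')|:\mathbf{x}',\mathbf{x}''\in M,\ |\mathbf{x}'-\mathbf{x}''|<t\}$. *)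

theory Defs
  imports "HOL-Analysis.Analysis"
begin

definition W :: "real \<Rightarrow> 'a::euclidean_space \<Rightarrow> real" where
  "W \<alpha> x = exp (- (norm x powr \<alpha>))"

definition Lp_norm :: "ennreal \<Rightarrow> ('a::euclidean_space \<Rightarrow> real) \<Rightarrow> ennreal" where
  "Lp_norm p g =
     (if p = \<infinity> then (SUP x. ennreal \<bar>g x\<bar>)
      else (let I = (\<integral>\<^sup>+ x. ennreal (\<bar>g x\<bar> powr enn2real p) \<partial>lebesgue)
            in if I = \<infinity> then \<infinity> else ennreal ((enn2real I) powr (1 / enn2real p))))"

definition in_Lp :: "real \<Rightarrow> ('a::euclidean_space \<Rightarrow> real) \<Rightarrow> bool" where
  "in_Lp p g \<longleftrightarrow> g \<in> borel_measurable lebesgue \<and>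
     (\<integral>\<^sup>+ x. ennreal (\<bar>g x\<bar> powr p) \<partial>lebesgue) < \<infinity>"

definition pw_linear_convex :: "('a::euclidean_space \<Rightarrow> real) \<Rightarrow> bool" where
  "pw_linear_convex h \<longleftrightarrow> (\<exists>n::nat. \<exists>a::nat \<Rightarrow> 'a. \<exists>b::nat \<Rightarrow> real. n \<ge> 1 \<and>
     h = (\<lambda>x. Max {a i \<bullet> x + b i | i. i < n}))"

definition modcont :: "('a::euclidean_space \<Rightarrow> real) \<Rightarrow> real \<Rightarrow> 'a set \<Rightarrow> ereal" where
  "modcont g t M = (SUP xy \<in> {(x', x''). x' \<in> M \<and> x'' \<in> M \<and> norm (x' - x'') < t}.
      ereal \<bar>g (fst xy) - g (snd xy)\<bar>)"

end

theory Submission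
  imports Defs
begin

text \<open>A convex function is continuous and is the supremum of its affine minorants, which are
obtained by separating points from its closed convex epigraph. By compactness, finitely many of
them bring their maximum \<open>h\<close> within \<open>\<delta>\<close> of \<open>f\<close> on a ball; adding one global minorant \<open>\<ell>\<^sub>0\<close>
gives \<open>0 \<le> f - h \<le> f - \<ell>\<^sub>0\<close> everywhere, and a maximum of finitely many affine functions is
Lipschitz. Since \<open>\<ell>\<^sub>0 W\<^sub>\<alpha>\<close> decays like \<open>exp (-|x|/2)\<close>, the function \<open>(f - \<ell>\<^sub>0) W\<^sub>\<alpha>\<close> inherits
the integrability (resp. the decay at infinity) of \<open>f W\<^sub>\<alpha>\<close>, so the error \<open>(f - h) W\<^sub>\<alpha>\<close> is small
outside a large ball, while inside the ball it is at most \<open>\<delta>\<close>.\<close>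

definition max_affine :: "('a::real_inner \<times> real) set \<Rightarrow> 'a \<Rightarrow> real" where
  "max_affine F x = Max ((\<lambda>(u, b). u \<bullet> x + b) ` F)"

lemma pw_linear_convex_max_affine:
  fixes F :: "('a::euclidean_space \<times> real) set"
  assumes "finite F" "F \<noteq> {}"
  shows "pw_linear_convex (max_affine F)"
proof -
  obtain g where g: "bij_betw g {..<card F} F"
    using ex_bij_betw_nat_finite[OF assms(1)] by (auto simp: lessThan_atLeast0)
  have "card F \<ge> 1" using assms by (simp add: Suc_leI card_gt_0_iff)
  moreover have "max_affine F = (\<lambda>x. Max {fst (g i) \<bullet> x + snd (g i) | i. i < card F})"
  proof
    fix x
    have "{fst (g i) \<bullet> x + snd (g i) | i. i < card F} = (\<lambda>(u, b). u \<bullet> x + b) ` g ` {..<card F}"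
      by (auto simp: case_prod_beta)
    then show "max_affine F x = Max {fst (g i) \<bullet> x + snd (g i) | i. i < card F}"
      using g by (simp add: max_affine_def bij_betw_def)
  qed
  ultimately show ?thesis
    unfolding pw_linear_convex_def by (intro exI[of _ "card F"] exI[of _ "fst \<circ> g"] exI[of _ "snd \<circ> g"]) simp
qed

lemma max_affine_ge:
  assumes "finite F" "(u, b) \<in> F"
  shows "u \<bullet> x + b \<le> max_affine F x"
  unfolding max_affine_def using assms by (intro Max_ge) force+

lemma max_affine_le:
  assumes "finite F" "F \<noteq> {}" "\<And>u b. (u, b) \<in> F \<Longrightarrow> u \<bullet> x + b \<le> c"
  shows "max_affine F x \<le> c"
  unfolding max_affine_def using assms by (subst Max_le_iff) auto

lemma lipschitz_on_max_affine:
  fixes F :: "('a::real_inner \<times> real) set"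
  assumes "finite F" "F \<noteq> {}"
  shows "lipschitz_on (\<Sum>(u, b)\<in>F. norm u) UNIV (max_affine F)"
proof -
  define C where "C = (\<Sum>(u, b)\<in>F. norm u)"
  have one_sided: "max_affine F x - max_affine F y \<le> C * norm (x - y)" for x y
  proof -
    have "max_affine F x \<in> (\<lambda>(u, b). u \<bullet> x + b) ` F"
      unfolding max_affine_def using assms by (intro Max_in) auto
    then obtain u b where ub: "(u, b) \<in> F" "max_affine F x = u \<bullet> x + b" by auto
    have "u \<bullet> x = u \<bullet> y + u \<bullet> (x - y)" by (simp add: inner_diff_right)
    also have "u \<bullet> (x - y) \<le> norm u * norm (x - y)" by (simp add: norm_cauchy_schwarz)
    also have "norm u * norm (x - y) \<le> C * norm (x - y)"
      unfolding C_def using assms(1) ub(1)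
      by (intro mult_right_mono member_le_sum[of "(u, b)" F "\<lambda>(u, b). norm u", simplified]) auto
    finally show ?thesis using ub max_affine_ge[OF assms(1) ub(1), of y] by simp
  qed
  have "dist (max_affine F x) (max_affine F y) \<le> C * dist x y" for x y
    using one_sided[of x y] one_sided[of y x]
    by (simp add: dist_real_def dist_norm abs_le_iff norm_minus_commute)
  moreover have "C \<ge> 0" unfolding C_def by (intro sum_nonneg) auto
  ultimately show ?thesis unfolding C_def[symmetric] by (intro lipschitz_onI)
qed

lemma modcont_le_if_lipschitz_on:
  assumes "lipschitz_on C UNIV h"
  shows "modcont h t UNIV \<le> ereal (C * t)"
  unfolding modcont_def
proof (rule SUP_least, clarsimp)
  fix x y :: 'a assume "norm (x - y) < t"
  then have "C * norm (x - y) \<le> C * t"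
    using lipschitz_on_nonneg[OF assms] by (intro mult_left_mono) auto
  then show "\<bar>h x - h y\<bar> \<le> C * t"
    using lipschitz_on_normD[OF assms, of x y] by simp
qed

lemma convex_on_affine_minorant_close:
  fixes f :: "'a::euclidean_space \<Rightarrow> real"
  assumes cv: "convex_on UNIV f" and "\<delta> > 0"
  shows "\<exists>u b. (\<forall>x. u \<bullet> x + b \<le> f x) \<and> f y - \<delta> < u \<bullet> y + b"
proof -
  define S where "S = {z :: 'a \<times> real. f (fst z) \<le> snd z}"
  have ct: "continuous_on UNIV f" by (rule convex_on_continuous[OF open_UNIV cv])
  have "convex S" unfolding S_def
    using convex_epigraph[of UNIV f] cv by (simp add: epigraph_def)
  moreover have "closed S" unfolding S_def
    by (intro closed_Collect_le continuous_intros continuous_on_compose2[OF ct]) auto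
  moreover have "(y, f y - \<delta>) \<notin> S" using \<open>\<delta> > 0\<close> by (simp add: S_def)
  ultimately obtain a c where ac: "a \<bullet> (y, f y - \<delta>) < c" "\<forall>z\<in>S. a \<bullet> z > c"
    using separating_hyperplane_closed_point by blast
  obtain v k where a: "a = (v, k)" by (cases a)
  have above: "v \<bullet> x + k * t > c" if "f x \<le> t" for x t
    using ac(2) that by (auto simp: S_def a inner_Pair)
  have below: "v \<bullet> y + k * (f y - \<delta>) < c" using ac(1) by (simp add: a inner_Pair)
  have "k > 0"
  proof (rule ccontr)
    assume "\<not> k > 0"
    then have "k * f y \<le> k * (f y - \<delta>)" using \<open>\<delta> > 0\<close> by (simp add: mult_left_mono_neg)
    then show False using above[of y "f y"] below by simp
  qed
  have "(- v /\<^sub>R k) \<bullet> x + c / k \<le> f x" for x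
  proof -
    have "(c - v \<bullet> x) / k < f x"
      using above[of x "f x"] \<open>k > 0\<close> by (simp add: divide_less_eq mult.commute)
    then show ?thesis using \<open>k > 0\<close> by (simp add: inner_minus_left field_simps)
  qed
  moreover have "f y - \<delta> < (- v /\<^sub>R k) \<bullet> y + c / k"
  proof -
    have "f y - \<delta> < (c - v \<bullet> y) / k"
      using below \<open>k > 0\<close> by (simp add: less_divide_eq mult.commute)
    then show ?thesis using \<open>k > 0\<close> by (simp add: inner_minus_left field_simps)
  qed
  ultimately show ?thesis by blast
qed

lemma convex_on_max_affine_approx:
  fixes f :: "'a::euclidean_space \<Rightarrow> real"
  assumes cv: "convex_on UNIV f" and minorant: "\<And>x. u0 \<bullet> x + b0 \<le> f x" and "\<delta> > 0"
  shows "\<exists>h. pw_linear_convex h \<and> (\<forall>x. u0 \<bullet> x + b0 \<le> h x \<and> h x \<le> f x)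
     \<and> (\<forall>x\<in>cball 0 R. f x - h x < \<delta>) \<and> (\<exists>L>0. \<forall>t>0. modcont h t UNIV \<le> ereal (L * t))"
proof -
  obtain U B where UB: "\<And>y x. U y \<bullet> x + B y \<le> f x" "\<And>y. f y - \<delta> < U y \<bullet> y + B y"
    using convex_on_affine_minorant_close[OF cv \<open>\<delta> > 0\<close>] by metis
  define near where "near y = {x. f x - (U y \<bullet> x + B y) < \<delta>}" for y
  have "open (near y)" for y unfolding near_def
    using convex_on_continuous[OF open_UNIV cv] by (intro open_Collect_less continuous_intros)
  moreover have "x \<in> near x" for x using UB(2)[of x] by (simp add: near_def)
  then have "cball 0 R \<subseteq> (\<Union>y\<in>cball 0 R. near y)" by blast
  ultimately obtain T where T: "finite T" "cball 0 R \<subseteq> (\<Union>y\<in>T. near y)"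
    using compactE_image[OF compact_cball] by metis
  define F where "F = insert (u0, b0) ((\<lambda>y. (U y, B y)) ` T)"
  have F: "finite F" "F \<noteq> {}" using T(1) by (auto simp: F_def)
  have "max_affine F x \<le> f x" for x
    using F minorant UB(1) by (intro max_affine_le) (auto simp: F_def)
  moreover have "u0 \<bullet> x + b0 \<le> max_affine F x" for x
    using F by (intro max_affine_ge) (auto simp: F_def)
  moreover have "f x - max_affine F x < \<delta>" if x: "x \<in> cball 0 R" for x
  proof -
    obtain y where "y \<in> T" "x \<in> near y" using T(2) x by blast
    then show ?thesis using max_affine_ge[OF F(1), of "U y" "B y" x] by (auto simp: F_def near_def)
  qed
  moreover have "\<exists>L>0. \<forall>t>0. modcont (max_affine F) t UNIV \<le> ereal (L * t)"
  proof -
    obtain C where C: "lipschitz_on C UNIV (max_affine F)"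
      using lipschitz_on_max_affine[OF F] by blast
    then have "lipschitz_on (C + 1) UNIV (max_affine F)" by (rule lipschitz_on_mono) auto
    moreover have "C + 1 > 0" using lipschitz_on_nonneg[OF C] by simp
    ultimately show ?thesis using modcont_le_if_lipschitz_on by blast
  qed
  ultimately show ?thesis using pw_linear_convex_max_affine[OF F] by blast
qed

lemma W_pos [simp]: "0 < W \<alpha> x"
  by (simp add: W_def)

lemma W_nonneg [simp]: "0 \<le> W \<alpha> x"
  by (simp add: W_def)

lemma W_le_1 [simp]: "W \<alpha> x \<le> 1"
  by (simp add: W_def)

lemma borel_measurable_W [measurable]: "W \<alpha> \<in> borel_measurable borel"
  unfolding W_def by measurable

lemma norm_powr_ge_norm_minus_1:
  assumes "1 \<le> \<alpha>"
  shows "norm x - 1 \<le> norm x powr \<alpha>"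
proof (cases "norm x \<ge> 1")
  case True
  then have "norm x powr 1 \<le> norm x powr \<alpha>" using assms by (intro powr_mono) auto
  then show ?thesis using True by simp
qed (smt (verit) powr_ge_zero)

lemma W_powr_le_exp:
  assumes "1 \<le> P" "1 \<le> \<alpha>"
  shows "W \<alpha> x powr P \<le> exp (1 - norm x)"
proof -
  have "norm x - 1 \<le> norm x powr \<alpha>" by (rule norm_powr_ge_norm_minus_1[OF \<open>1 \<le> \<alpha>\<close>])
  moreover have "norm x powr \<alpha> \<le> P * norm x powr \<alpha>" using \<open>1 \<le> P\<close> by (simp add: mult_le_cancel_right1)
  ultimately have "- (P * norm x powr \<alpha>) \<le> 1 - norm x" by linarith
  then show ?thesis by (simp add: W_def exp_powr_real mult.commute)
qed

lemma one_plus_div_powr_le_exp: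
  fixes s P :: real
  assumes "0 \<le> s" "0 < P"
  shows "(1 + s / P) powr P \<le> exp s"
proof -
  have "(1 + s / P) powr P \<le> exp (s / P) powr P"
    using assms by (intro powr_mono2) (auto simp: exp_ge_add_one_self)
  also have "\<dots> = exp s" using assms by (simp add: exp_powr_real)
  finally show ?thesis .
qed

lemma affine_times_W_powr_le_exp:
  fixes u :: "'a::euclidean_space"
  assumes P: "1 \<le> P" and "1 \<le> \<alpha>"
  shows "\<exists>K\<ge>0. \<forall>x. (\<bar>u \<bullet> x + b\<bar> * W \<alpha> x) powr P \<le> K * exp (- norm x / 2)"
proof -
  define A where "A = (norm u + \<bar>b\<bar>) * 4 * P"
  define K where "K = A powr P * exp 1"
  have "A \<ge> 0" unfolding A_def using P by simp
  have "(\<bar>u \<bullet> x + b\<bar> * W \<alpha> x) powr P \<le> K * exp (- norm x / 2)" for x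
  proof -
    define t where "t = norm x"
    have "t \<ge> 0" unfolding t_def by simp
    have "\<bar>u \<bullet> x + b\<bar> \<le> norm u * t + \<bar>b\<bar>"
      unfolding t_def by (smt (verit) Cauchy_Schwarz_ineq2)
    also have "\<dots> \<le> (norm u + \<bar>b\<bar>) * (1 + t)" using \<open>t \<ge> 0\<close> by (simp add: algebra_simps)
    also have "\<dots> \<le> (norm u + \<bar>b\<bar>) * (4 * P + t)" using P by (intro mult_left_mono) auto
    also have "\<dots> = A * (1 + (t / 4) / P)" unfolding A_def using P by (simp add: field_simps)
    finally have affine: "\<bar>u \<bullet> x + b\<bar> \<le> A * (1 + (t / 4) / P)" .
    have "(\<bar>u \<bullet> x + b\<bar> * W \<alpha> x) powr P = \<bar>u \<bullet> x + b\<bar> powr P * W \<alpha> x powr P"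
      by (simp add: powr_mult)
    also have "\<dots> \<le> (A * (1 + (t / 4) / P)) powr P * exp (1 - t)"
      using affine W_powr_le_exp[OF assms, of x] P unfolding t_def by (intro mult_mono powr_mono2) auto
    also have "\<dots> = A powr P * (1 + (t / 4) / P) powr P * exp (1 - t)"
      using \<open>A \<ge> 0\<close> \<open>t \<ge> 0\<close> P by (simp add: powr_mult)
    also have "\<dots> \<le> A powr P * exp (t / 4) * exp (1 - t)"
      using one_plus_div_powr_le_exp[of "t / 4" P] \<open>t \<ge> 0\<close> P
      by (intro mult_right_mono mult_left_mono) auto
    also have "\<dots> = K * exp (- (3 * t / 4))"
      unfolding K_def by (simp add: exp_add[symmetric] field_simps)
    also have "\<dots> \<le> K * exp (- t / 2)" unfolding K_def using \<open>t \<ge> 0\<close> by (intro mult_left_mono) auto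
    finally show ?thesis unfolding t_def .
  qed
  moreover have "K \<ge> 0" unfolding K_def by simp
  ultimately show ?thesis by blast
qed

lemma affine_times_W_tendsto_0:
  fixes u :: "'a::euclidean_space"
  assumes "1 \<le> \<alpha>"
  shows "((\<lambda>x. (u \<bullet> x + b) * W \<alpha> x) \<longlongrightarrow> 0) at_infinity"
proof -
  obtain K where K: "\<forall>x. (\<bar>u \<bullet> x + b\<bar> * W \<alpha> x) powr 1 \<le> K * exp (- norm x / 2)"
    using affine_times_W_powr_le_exp[of 1 \<alpha> u b] assms by auto
  have "((\<lambda>t::real. K * exp (- t / 2)) \<longlongrightarrow> 0) at_top" by real_asymp
  then have "((\<lambda>x::'a. K * exp (- norm x / 2)) \<longlongrightarrow> 0) at_infinity"
    using filterlim_compose[OF _ filterlim_norm_at_top] by blast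
  then show ?thesis
  proof (rule Lim_null_comparison[rotated])
    show "\<forall>\<^sub>F x in at_infinity. norm ((u \<bullet> x + b) * W \<alpha> x) \<le> K * exp (- norm x / 2)"
      using K W_pos[of \<alpha>] by (intro always_eventually allI) (simp add: abs_mult)
  qed
qed

lemma power_le_exp_quarter:
  fixes y :: real
  assumes "y \<ge> 0" "n \<ge> 1"
  shows "y ^ n \<le> (4 * real n) ^ n * exp (y / 4)"
proof -
  have "y \<le> 4 * real n * (1 + y / (4 * real n))" using assms by (simp add: field_simps)
  also have "1 + y / (4 * real n) \<le> exp (y / (4 * real n))" by (rule exp_ge_add_one_self)
  finally have "y \<le> 4 * real n * exp (y / (4 * real n))" using assms by (simp add: mult_left_mono)
  then have "y ^ n \<le> (4 * real n * exp (y / (4 * real n))) ^ n" using assms by (intro power_mono) auto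
  also have "\<dots> = (4 * real n) ^ n * exp (y / 4)"
    using assms by (simp add: power_mult_distrib exp_of_nat_mult[symmetric])
  finally show ?thesis .
qed

lemma summable_exp_neg_half_times_power:
  assumes "n \<ge> 1"
  shows "summable (\<lambda>k::nat. exp (- real k / 2) * (real k + 1) ^ n)"
proof (rule summable_comparison_test'[where N = 0])
  define C where "C = (4 * real n) ^ n * exp (1/4)"
  show "summable (\<lambda>k. C * exp (-1/4) ^ k)" by (intro summable_mult summable_geometric) simp
  fix k :: nat
  have "exp (- real k / 2) * (real k + 1) ^ n \<le> exp (- real k / 2) * ((4 * real n) ^ n * exp ((real k + 1) / 4))"
    using power_le_exp_quarter[of "real k + 1" n] assms by (intro mult_left_mono) auto
  also have "\<dots> = C * exp (-1/4) ^ k"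
    unfolding C_def by (simp add: exp_of_nat_mult[symmetric] exp_add[symmetric] field_simps)
  finally show "norm (exp (- real k / 2) * (real k + 1) ^ n) \<le> C * exp (-1/4) ^ k" by simp
qed

text \<open>Cover \<open>\<real>\<^sup>d\<close> by the balls \<open>cball 0 (k + 1)\<close>, on the \<open>k\<close>-th of which the integrand is weighted
by \<open>exp (-k/2)\<close>; the volumes grow only polynomially in \<open>k\<close>.\<close>
lemma nn_integral_exp_neg_norm_half_finite:
  "(\<integral>\<^sup>+ x. ennreal (exp (- norm (x::'a::euclidean_space) / 2)) \<partial>lborel) < \<infinity>"
proof -
  define V where "V = unit_ball_vol (real DIM('a))"
  define a where "a k = exp (- real k / 2) * (V * (real k + 1) ^ DIM('a))" for k :: nat
  have a_nonneg: "a k \<ge> 0" for k unfolding a_def V_def by (simp add: unit_ball_vol_nonneg)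
  have "summable (\<lambda>k. V * (exp (- real k / 2) * (real k + 1) ^ DIM('a)))"
    by (intro summable_mult summable_exp_neg_half_times_power) (simp add: Suc_leI)
  then have "summable a" unfolding a_def by (simp add: mult.left_commute)
  have shells: "ennreal (exp (- norm x / 2))
      \<le> (\<Sum>k. ennreal (exp (- real k / 2)) * indicator (cball (0::'a) (real k + 1)) x)" for x
  proof -
    define k where "k = nat \<lfloor>norm x\<rfloor>"
    have "real k \<le> norm x" "norm x \<le> real k + 1"
      unfolding k_def by (simp_all add: of_nat_floor)
    then have "ennreal (exp (- norm x / 2))
        \<le> ennreal (exp (- real k / 2)) * indicator (cball (0::'a) (real k + 1)) x"
      by (simp add: indicator_def)
    also have "\<dots> \<le> (\<Sum>k. ennreal (exp (- real k / 2)) * indicator (cball (0::'a) (real k + 1)) x)"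
      using sum_le_suminf[OF summableI, of "{k}"] by simp
    finally show ?thesis .
  qed
  have "(\<integral>\<^sup>+ x. ennreal (exp (- norm (x::'a) / 2)) \<partial>lborel)
      \<le> (\<integral>\<^sup>+ x. (\<Sum>k. ennreal (exp (- real k / 2)) * indicator (cball (0::'a) (real k + 1)) x) \<partial>lborel)"
    by (intro nn_integral_mono shells)
  also have "\<dots> = (\<Sum>k. \<integral>\<^sup>+ x. ennreal (exp (- real k / 2)) * indicator (cball (0::'a) (real k + 1)) x \<partial>lborel)"
    by (intro nn_integral_suminf borel_measurable_times_ennreal borel_measurable_indicator) simp_all
  also have "\<dots> = (\<Sum>k. ennreal (a k))"
    by (simp add: nn_integral_cmult_indicator emeasure_cball a_def V_def ennreal_mult')
  also have "\<dots> = ennreal (\<Sum>k. a k)" using a_nonneg \<open>summable a\<close> by (rule suminf_ennreal2)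
  finally show ?thesis by (simp add: order_le_less_trans)
qed

lemma nn_integral_outside_cball_less:
  fixes g :: "'a::euclidean_space \<Rightarrow> ennreal"
  assumes "g \<in> borel_measurable lborel" "(\<integral>\<^sup>+ x. g x \<partial>lborel) < \<infinity>" "\<eta> > 0"
  shows "\<exists>R\<ge>0. (\<integral>\<^sup>+ x. g x * indicator (- cball 0 R) x \<partial>lborel) < \<eta>"
proof -
  define tail where "tail i x = g x * indicator (- cball (0::'a) (real i)) x" for i x
  have "AE x in lborel. tail (Suc i) x \<le> tail i x" for i
    unfolding tail_def by (intro AE_I2) (auto simp: indicator_def)
  moreover have "tail i \<in> borel_measurable lborel" for i unfolding tail_def using assms(1) by simp
  moreover have "(\<integral>\<^sup>+ x. tail 0 x \<partial>lborel) < \<infinity>"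
    using assms(2) by (rule le_less_trans[rotated]) (auto intro!: nn_integral_mono simp: tail_def indicator_def)
  ultimately have "(\<integral>\<^sup>+ x. (INF i. tail i x) \<partial>lborel) = (INF i. integral\<^sup>N lborel (tail i))"
    by (rule nn_integral_monotone_convergence_INF_AE')
  moreover have "(INF i. tail i x) = 0" for x
  proof -
    obtain n :: nat where "norm x < real n" using reals_Archimedean2 by blast
    then have "tail n x = 0" by (simp add: tail_def)
    then show ?thesis by (metis INF_lower bot.extremum_uniqueI iso_tuple_UNIV_I zero_ennreal_def bot_ennreal)
  qed
  ultimately have "(INF i. integral\<^sup>N lborel (tail i)) < \<eta>" using assms(3) by simp
  then obtain i where "integral\<^sup>N lborel (tail i) < \<eta>" by (auto simp: INF_less_iff)
  then show ?thesis unfolding tail_def by (intro exI[of _ "real i"]) auto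
qed

lemma powr_add_le_two_powr:
  fixes a b P :: real
  assumes "a \<ge> 0" "b \<ge> 0" "P > 0"
  shows "(a + b) powr P \<le> 2 powr P * (a powr P + b powr P)"
proof -
  have "(a + b) powr P \<le> (2 * max a b) powr P" using assms by (intro powr_mono2) auto
  also have "\<dots> = 2 powr P * max a b powr P" using assms by (simp add: powr_mult)
  also have "max a b powr P \<le> a powr P + b powr P" by (simp add: max_def)
  finally show ?thesis by (simp add: mult_left_mono)
qed

lemma diff_times_powr_le:
  fixes a c w P :: real
  assumes "c \<le> a" "0 \<le> w" "0 < P"
  shows "((a - c) * w) powr P \<le> 2 powr P * (\<bar>a * w\<bar> powr P + (\<bar>c\<bar> * w) powr P)"
proof -
  have "\<bar>c * w\<bar> = \<bar>c\<bar> * w" using \<open>0 \<le> w\<close> by (simp add: abs_mult)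
  then have "(a - c) * w \<le> \<bar>a * w\<bar> + \<bar>c\<bar> * w"
    using abs_ge_self[of "a * w"] abs_ge_minus_self[of "c * w"] by (simp add: left_diff_distrib)
  then have "((a - c) * w) powr P \<le> (\<bar>a * w\<bar> + \<bar>c\<bar> * w) powr P"
    using assms by (intro powr_mono2) auto
  also have "\<dots> \<le> 2 powr P * (\<bar>a * w\<bar> powr P + (\<bar>c\<bar> * w) powr P)"
    using assms by (intro powr_add_le_two_powr) auto
  finally show ?thesis .
qed

lemma nn_integral_affine_minorant_gap_finite:
  fixes f :: "'a::euclidean_space \<Rightarrow> real"
  assumes f [measurable]: "f \<in> borel_measurable borel" and "1 \<le> \<alpha>" and P: "1 \<le> P"
    and fin: "(\<integral>\<^sup>+ x. ennreal (\<bar>f x * W \<alpha> x\<bar> powr P) \<partial>lborel) < \<infinity>"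
    and minorant: "\<And>x. u \<bullet> x + b \<le> f x"
  shows "(\<integral>\<^sup>+ x. ennreal (((f x - (u \<bullet> x + b)) * W \<alpha> x) powr P) \<partial>lborel) < \<infinity>"
proof -
  obtain K where K: "K \<ge> 0" "\<forall>x. (\<bar>u \<bullet> x + b\<bar> * W \<alpha> x) powr P \<le> K * exp (- norm x / 2)"
    using affine_times_W_powr_le_exp[OF P \<open>1 \<le> \<alpha>\<close>, of u b] by auto
  have bound: "ennreal (((f x - (u \<bullet> x + b)) * W \<alpha> x) powr P)
     \<le> ennreal (2 powr P) * (ennreal (\<bar>f x * W \<alpha> x\<bar> powr P) + ennreal K * ennreal (exp (- norm x / 2)))" for x
  proof -
    have "((f x - (u \<bullet> x + b)) * W \<alpha> x) powr P
        \<le> 2 powr P * (\<bar>f x * W \<alpha> x\<bar> powr P + (\<bar>u \<bullet> x + b\<bar> * W \<alpha> x) powr P)"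
      using minorant[of x] P by (intro diff_times_powr_le) auto
    also have "\<dots> \<le> 2 powr P * (\<bar>f x * W \<alpha> x\<bar> powr P + K * exp (- norm x / 2))"
      using K(2) by (intro mult_left_mono add_left_mono) auto
    finally have "ennreal (((f x - (u \<bullet> x + b)) * W \<alpha> x) powr P)
        \<le> ennreal (2 powr P * (\<bar>f x * W \<alpha> x\<bar> powr P + K * exp (- norm x / 2)))"
      by (rule ennreal_leI)
    then show ?thesis using K(1) by (simp add: ennreal_mult ennreal_plus)
  qed
  have "(\<integral>\<^sup>+ x. ennreal (((f x - (u \<bullet> x + b)) * W \<alpha> x) powr P) \<partial>lborel)
     \<le> (\<integral>\<^sup>+ x. ennreal (2 powr P) * (ennreal (\<bar>f x * W \<alpha> x\<bar> powr P) + ennreal K * ennreal (exp (- norm x / 2))) \<partial>lborel)"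
    by (intro nn_integral_mono bound)
  also have "\<dots> = ennreal (2 powr P) * ((\<integral>\<^sup>+ x. ennreal (\<bar>f x * W \<alpha> x\<bar> powr P) \<partial>lborel)
      + ennreal K * (\<integral>\<^sup>+ x. ennreal (exp (- norm (x::'a) / 2)) \<partial>lborel))"
    by (simp add: nn_integral_cmult nn_integral_add)
  also have "\<dots> < \<infinity>"
    using fin nn_integral_exp_neg_norm_half_finite[where 'a='a]
    by (simp add: ennreal_mult_less_top less_top[symmetric] ennreal_mult_eq_top_iff)
  finally show ?thesis .
qed

lemma weighted_gap_bounds:
  assumes "\<And>x. u \<bullet> x + b \<le> h x" "\<And>x. h x \<le> f x"
  shows "0 \<le> (f x - h x) * W \<alpha> x"
    and "(f x - h x) * W \<alpha> x \<le> (f x - (u \<bullet> x + b)) * W \<alpha> x"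
    and "(f x - h x) * W \<alpha> x \<le> f x - h x"
proof -
  show "0 \<le> (f x - h x) * W \<alpha> x" using assms(2)[of x] by simp
  show "(f x - h x) * W \<alpha> x \<le> (f x - (u \<bullet> x + b)) * W \<alpha> x"
    using assms(1)[of x] by (intro mult_right_mono) auto
  show "(f x - h x) * W \<alpha> x \<le> f x - h x"
    using assms(2)[of x] by (simp add: mult_left_le)
qed

lemma nn_integral_powr_le_split_cball:
  fixes g :: "'a::euclidean_space \<Rightarrow> real"
  assumes G: "G \<in> borel_measurable lborel" and "0 \<le> \<delta>" "0 \<le> P" "0 \<le> R"
    and inside: "\<And>x. x \<in> cball 0 R \<Longrightarrow> \<bar>g x\<bar> \<le> \<delta>"
    and outside: "\<And>x. x \<notin> cball 0 R \<Longrightarrow> ennreal (\<bar>g x\<bar> powr P) \<le> G x"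
  shows "(\<integral>\<^sup>+ x. ennreal (\<bar>g x\<bar> powr P) \<partial>lborel)
    \<le> ennreal (\<delta> powr P * (unit_ball_vol DIM('a) * R ^ DIM('a))) + (\<integral>\<^sup>+ x. G x * indicator (- cball 0 R) x \<partial>lborel)"
proof -
  have pointwise: "ennreal (\<bar>g x\<bar> powr P) \<le> ennreal (\<delta> powr P) * indicator (cball 0 R) x + G x * indicator (- cball 0 R) x" for x
  proof (cases "x \<in> cball 0 R")
    case True
    then have "\<bar>g x\<bar> powr P \<le> \<delta> powr P" using inside \<open>0 \<le> P\<close> by (intro powr_mono2) auto
    then show ?thesis using True by (simp add: ennreal_leI)
  qed (use outside in simp)
  have "(\<integral>\<^sup>+ x. ennreal (\<bar>g x\<bar> powr P) \<partial>lborel)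
      \<le> (\<integral>\<^sup>+ x. ennreal (\<delta> powr P) * indicator (cball 0 R) x + G x * indicator (- cball 0 R) x \<partial>lborel)"
    by (intro nn_integral_mono pointwise)
  also have "\<dots> = (\<integral>\<^sup>+ x. ennreal (\<delta> powr P) * indicator (cball (0::'a) R) x \<partial>lborel)
      + (\<integral>\<^sup>+ x. G x * indicator (- cball 0 R) x \<partial>lborel)"
    using G by (intro nn_integral_add borel_measurable_times_ennreal borel_measurable_indicator) auto
  also have "(\<integral>\<^sup>+ x. ennreal (\<delta> powr P) * indicator (cball (0::'a) R) x \<partial>lborel)
      = ennreal (\<delta> powr P * (unit_ball_vol DIM('a) * R ^ DIM('a)))"
    using \<open>0 \<le> R\<close> by (simp add: nn_integral_cmult_indicator emeasure_cball ennreal_mult unit_ball_vol_nonneg)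
  finally show ?thesis .
qed

lemma Lp_norm_less_if_nn_integral_less:
  assumes "p \<noteq> \<infinity>" "0 < enn2real p" "0 < \<epsilon>"
    and less: "(\<integral>\<^sup>+ x. ennreal (\<bar>g x\<bar> powr enn2real p) \<partial>lborel) < ennreal (\<epsilon> powr enn2real p)"
  shows "Lp_norm p g < ennreal \<epsilon>"
proof -
  define P where "P = enn2real p"
  define I where "I = (\<integral>\<^sup>+ x. ennreal (\<bar>g x\<bar> powr P) \<partial>lborel)"
  have "0 < P" using assms(2) by (simp add: P_def)
  have "I < \<infinity>" unfolding I_def P_def using less by (rule order.strict_trans) simp
  have "enn2real I < \<epsilon> powr P" using \<open>I < \<infinity>\<close> less by (simp add: I_def P_def)
  then have "enn2real I powr (1 / P) < (\<epsilon> powr P) powr (1 / P)"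
    using \<open>0 < P\<close> by (intro powr_less_mono2) auto
  also have "\<dots> = \<epsilon>" using \<open>0 < \<epsilon>\<close> \<open>0 < P\<close> by (simp add: powr_powr)
  moreover have "Lp_norm p g = ennreal (enn2real I powr (1 / P))"
    using \<open>p \<noteq> \<infinity>\<close> \<open>I < \<infinity>\<close> by (simp add: Lp_norm_def nn_integral_completion I_def P_def Let_def)
  ultimately show ?thesis using \<open>0 < \<epsilon>\<close> by (simp add: ennreal_lessI)
qed

lemma ex_pos_powr_times_less:
  fixes V \<eta> P :: real
  assumes "0 \<le> V" "0 < \<eta>" "0 < P"
  shows "\<exists>\<delta>>0. \<delta> powr P * V < \<eta>"
proof -
  define \<delta> where "\<delta> = (\<eta> / (V + 1)) powr (1 / P)"
  have "\<delta> > 0" unfolding \<delta>_def using assms by simp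
  have \<delta>_powr: "\<delta> powr P = \<eta> / (V + 1)" unfolding \<delta>_def using assms by (simp add: powr_powr)
  have "\<delta> powr P * V < \<delta> powr P * (V + 1)" using \<open>\<delta> > 0\<close> by simp
  also have "\<dots> = \<eta>" unfolding \<delta>_powr using assms by simp
  finally show ?thesis using \<open>\<delta> > 0\<close> by blast
qed

lemma pw_linear_approx_weighted_sup:
  fixes f :: "'a::euclidean_space \<Rightarrow> real"
  assumes cv: "convex_on UNIV f" and "1 \<le> \<alpha>" and "\<epsilon> > 0"
    and lim: "((\<lambda>x. f x * W \<alpha> x) \<longlongrightarrow> 0) at_infinity"
  shows "\<exists>h. pw_linear_convex h \<and> Lp_norm \<infinity> (\<lambda>x. (f x - h x) * W \<alpha> x) < ennreal \<epsilon> \<and>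
           (\<exists>L>0. \<forall>t>0. modcont h t UNIV \<le> ereal (L * t))"
proof -
  obtain u b where minorant: "\<And>x. u \<bullet> x + b \<le> f x"
    using convex_on_affine_minorant_close[OF cv zero_less_one] by blast
  have "((\<lambda>x. (f x - (u \<bullet> x + b)) * W \<alpha> x) \<longlongrightarrow> 0 - 0) at_infinity"
    unfolding left_diff_distrib by (intro tendsto_diff lim affine_times_W_tendsto_0 \<open>1 \<le> \<alpha>\<close>)
  then have "\<forall>\<^sub>F x in at_infinity. dist ((f x - (u \<bullet> x + b)) * W \<alpha> x) 0 < \<epsilon> / 2"
    using \<open>\<epsilon> > 0\<close> by (intro tendstoD) auto
  then obtain R where far: "\<And>x. R \<le> norm x \<Longrightarrow> \<bar>(f x - (u \<bullet> x + b)) * W \<alpha> x\<bar> < \<epsilon> / 2"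
    unfolding eventually_at_infinity by auto
  obtain h where h: "pw_linear_convex h" "\<forall>x. u \<bullet> x + b \<le> h x \<and> h x \<le> f x"
      "\<forall>x\<in>cball 0 R. f x - h x < \<epsilon> / 2" "\<exists>L>0. \<forall>t>0. modcont h t UNIV \<le> ereal (L * t)"
    using convex_on_max_affine_approx[OF cv minorant, of "\<epsilon> / 2" R] \<open>\<epsilon> > 0\<close> by auto
  have "\<And>x. u \<bullet> x + b \<le> h x" "\<And>x. h x \<le> f x" using h(2) by auto
  note gap = weighted_gap_bounds[OF this]
  have "\<bar>(f x - h x) * W \<alpha> x\<bar> \<le> \<epsilon> / 2" for x
  proof (cases "norm x \<le> R")
    case True
    then have "f x - h x < \<epsilon> / 2" using h(3) by simp
    then show ?thesis using gap(1,3)[where x = x and \<alpha> = \<alpha>] by linarith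
  next
    case False
    then show ?thesis using gap(1,2)[where x = x and \<alpha> = \<alpha>] far[of x]
        abs_ge_self[of "(f x - (u \<bullet> x + b)) * W \<alpha> x"] by linarith
  qed
  then have "Lp_norm \<infinity> (\<lambda>x. (f x - h x) * W \<alpha> x) \<le> ennreal (\<epsilon> / 2)"
    unfolding Lp_norm_def by (auto intro!: SUP_least ennreal_leI)
  also have "\<dots> < ennreal \<epsilon>" using \<open>\<epsilon> > 0\<close> by (intro ennreal_lessI) auto
  finally show ?thesis using h(1,4) by blast
qed

lemma pw_linear_approx_weighted_Lp:
  fixes f :: "'a::euclidean_space \<Rightarrow> real"
  assumes cv: "convex_on UNIV f" and "1 \<le> \<alpha>" and "\<epsilon> > 0" and "1 \<le> p" "p \<noteq> \<infinity>"
    and Lp: "in_Lp (enn2real p) (\<lambda>x. f x * W \<alpha> x)"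
  shows "\<exists>h. pw_linear_convex h \<and> Lp_norm p (\<lambda>x. (f x - h x) * W \<alpha> x) < ennreal \<epsilon> \<and>
           (\<exists>L>0. \<forall>t>0. modcont h t UNIV \<le> ereal (L * t))"
proof -
  define P where "P = enn2real p"
  have "1 \<le> P" unfolding P_def using enn2real_mono[OF \<open>1 \<le> p\<close>] \<open>p \<noteq> \<infinity>\<close> by (simp add: top.not_eq_extremum)
  have f [measurable]: "f \<in> borel_measurable borel"
    using convex_on_continuous[OF open_UNIV cv] by (rule borel_measurable_continuous_onI)
  obtain u b where minorant: "\<And>x. u \<bullet> x + b \<le> f x"
    using convex_on_affine_minorant_close[OF cv zero_less_one] by blast
  define G where "G x = ennreal (((f x - (u \<bullet> x + b)) * W \<alpha> x) powr P)" for x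
  have G [measurable]: "G \<in> borel_measurable lborel" unfolding G_def by measurable
  have "(\<integral>\<^sup>+ x. ennreal (\<bar>f x * W \<alpha> x\<bar> powr P) \<partial>lborel) < \<infinity>"
    using Lp unfolding in_Lp_def P_def nn_integral_completion by blast
  from nn_integral_affine_minorant_gap_finite[OF f \<open>1 \<le> \<alpha>\<close> \<open>1 \<le> P\<close> this minorant]
  have "(\<integral>\<^sup>+ x. G x \<partial>lborel) < \<infinity>" by (simp only: G_def)
  moreover have "ennreal (\<epsilon> powr P / 2) > 0" using \<open>\<epsilon> > 0\<close> by simp
  ultimately obtain R where "R \<ge> 0"
    and tail: "(\<integral>\<^sup>+ x. G x * indicator (- cball 0 R) x \<partial>lborel) < ennreal (\<epsilon> powr P / 2)"
    using nn_integral_outside_cball_less[OF G] by blast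
  define V where "V = unit_ball_vol DIM('a) * R ^ DIM('a)"
  have "V \<ge> 0" unfolding V_def using \<open>R \<ge> 0\<close> by (simp add: unit_ball_vol_nonneg)
  obtain \<delta> where "\<delta> > 0" and ball_part: "\<delta> powr P * V < \<epsilon> powr P / 2"
    using ex_pos_powr_times_less[OF \<open>V \<ge> 0\<close>, of "\<epsilon> powr P / 2" P] \<open>\<epsilon> > 0\<close> \<open>1 \<le> P\<close> by auto
  obtain h where h: "pw_linear_convex h" "\<forall>x. u \<bullet> x + b \<le> h x \<and> h x \<le> f x"
      "\<forall>x\<in>cball 0 R. f x - h x < \<delta>" "\<exists>L>0. \<forall>t>0. modcont h t UNIV \<le> ereal (L * t)"
    using convex_on_max_affine_approx[OF cv minorant \<open>\<delta> > 0\<close>, of R] by auto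
  have "\<And>x. u \<bullet> x + b \<le> h x" "\<And>x. h x \<le> f x" using h(2) by auto
  note gap = weighted_gap_bounds[OF this]
  have "(\<integral>\<^sup>+ x. ennreal (\<bar>(f x - h x) * W \<alpha> x\<bar> powr P) \<partial>lborel)
      \<le> ennreal (\<delta> powr P * V) + (\<integral>\<^sup>+ x. G x * indicator (- cball 0 R) x \<partial>lborel)"
    unfolding V_def
  proof (rule nn_integral_powr_le_split_cball[OF G])
    fix x
    have abs_gap: "\<bar>(f x - h x) * W \<alpha> x\<bar> = (f x - h x) * W \<alpha> x" by (rule abs_of_nonneg[OF gap(1)])
    show "\<bar>(f x - h x) * W \<alpha> x\<bar> \<le> \<delta>" if "x \<in> cball 0 R"
      using h(3) that gap(3)[where x = x and \<alpha> = \<alpha>] unfolding abs_gap by fastforce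
    show "ennreal (\<bar>(f x - h x) * W \<alpha> x\<bar> powr P) \<le> G x"
      unfolding G_def abs_gap using gap(1,2) \<open>1 \<le> P\<close> by (intro ennreal_leI powr_mono2) simp_all
  qed (use \<open>\<delta> > 0\<close> \<open>1 \<le> P\<close> \<open>R \<ge> 0\<close> in simp_all)
  also have "\<dots> < ennreal (\<epsilon> powr P / 2 + \<epsilon> powr P / 2)"
    using ball_part tail \<open>\<epsilon> > 0\<close> by (intro add_mono_ennreal ennreal_lessI) auto
  finally have "(\<integral>\<^sup>+ x. ennreal (\<bar>(f x - h x) * W \<alpha> x\<bar> powr P) \<partial>lborel) < ennreal (\<epsilon> powr P)"
    by simp
  then have "Lp_norm p (\<lambda>x. (f x - h x) * W \<alpha> x) < ennreal \<epsilon>"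
    using \<open>1 \<le> P\<close> unfolding P_def by (intro Lp_norm_less_if_nn_integral_less \<open>p \<noteq> \<infinity>\<close> \<open>\<epsilon> > 0\<close>) auto
  with h(1,4) show ?thesis by blast
qed

theorem lemma3:
  fixes f :: "'a::euclidean_space \<Rightarrow> real" and p :: ennreal and \<alpha> :: real
  assumes "convex_on UNIV f"
    and "1 \<le> p" and "1 \<le> \<alpha>"
    and "p \<noteq> \<infinity> \<Longrightarrow> in_Lp (enn2real p) (\<lambda>x. f x * W \<alpha> x)"
    and "p = \<infinity> \<Longrightarrow> continuous_on UNIV f \<and> ((\<lambda>x. f x * W \<alpha> x) \<longlongrightarrow> 0) at_infinity"
  shows "\<forall>\<epsilon>>0. \<exists>h. pw_linear_convex h \<and>
           Lp_norm p (\<lambda>x. (f x - h x) * W \<alpha> x) < ennreal \<epsilon> \<and>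
           (\<exists>L>0. \<forall>t>0. modcont h t UNIV \<le> ereal (L * t))"
proof (intro allI impI)
  fix \<epsilon> :: real
  assume "\<epsilon> > 0"
  show "\<exists>h. pw_linear_convex h \<and> Lp_norm p (\<lambda>x. (f x - h x) * W \<alpha> x) < ennreal \<epsilon> \<and>
           (\<exists>L>0. \<forall>t>0. modcont h t UNIV \<le> ereal (L * t))"
  proof (cases "p = \<infinity>")
    case True
    then show ?thesis using pw_linear_approx_weighted_sup[OF assms(1,3) \<open>\<epsilon> > 0\<close>] assms(5) by simp
  next
    case False
    then show ?thesis using pw_linear_approx_weighted_Lp[OF assms(1,3) \<open>\<epsilon> > 0\<close> assms(2) False assms(4)] by simp
  qed
qed

end
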